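(* Let $\eta$ be a formal differential operator on $\mathcal{P}_c$, $\eta(y)=\sum_{k=0}^\infty M_k y^{(k)}$, where each $M_k$ is a complex polynomial with $\deg M_k\le k$ ($M_0$ a constant); for $k\in\mathbb{N}$ write $M_k=m_{kk}x^k+R_{k-1}$ with $\deg R_{k-1}\le k-1$. Let $d=(d_j)_{j\in\mathbb{N}_0}$ be a sequence of complex scalars, let $n\in\mathbb{N}$, and assume $d_n-d_0=\sum_{k=1}^n p(n,k)\,m_{kk}$. Assume that there are polynomials $p_0\equiv 1,p_1,\dots,p_{n-1}$ with $\deg p_r=r$ and $\eta p_r=d_rp_r$ for $0\le r\le n-1$. Let $(\alpha_j^{n-1})_{j=0}^{n-1}$ be the scalars with $\sum_{k=1}^n p(n,k)R_{k-1}x^{n-k}=\sum_{j=0}^{n-1}\alpha_j^{n-1}p_j$. Then there exists a polynomial $p_n=x^n+q_{n-1}$ with $\deg q_{n-1}\le n-1$ and $\eta p_n=d_np_n$ if and only if there exists an $n$-tuple of scalars $(\beta_j^{n-1})_{j=0}^{n-1}$ such that $(d_n-d_j)\beta_j^{n-1}=\alpha_j^{n-1}$ for all $0\le j\le n-1$.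
   Context: $\mathcal{P}_c$ is the space of polynomials in one real variable with complex coefficients; $y^{(k)}$ is the $k$-th derivative. For $n\in\mathbb{N}$ and $1\le r\le n$, $p(n,r)=\frac{n!}{(n-r)!}$. *)

theory Defs
  imports "HOL-Computational_Algebra.Polynomial"
begin

text \<open>Formal differential operator eta(y) = sum_k M_k * y^(k). For a polynomial y
  all derivatives of order > degree y vanish, so the sum is finite.\<close>
definition diff_op :: "(nat \<Rightarrow> complex poly) \<Rightarrow> complex poly \<Rightarrow> complex poly" where
  "diff_op M y = (\<Sum>k\<le>degree y. M k * (pderiv ^^ k) y)"

definition pnr :: "nat \<Rightarrow> nat \<Rightarrow> nat" where
  "pnr n r = fact n div fact (n - r)"

text \<open>Leading coefficient m_kk and remainder R_{k-1} of M_k = m_kk x^k + R_{k-1}\<close>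
definition mkk :: "(nat \<Rightarrow> complex poly) \<Rightarrow> nat \<Rightarrow> complex" where
  "mkk M k = coeff (M k) k"

definition Rk :: "(nat \<Rightarrow> complex poly) \<Rightarrow> nat \<Rightarrow> complex poly" where
  "Rk M k = M k - monom (coeff (M k) k) k"

end

theory Submission
  imports Defs
begin

text \<open>
  On a monomial, eta(x^n) = (d_0 + sum_k p(n,k) m_kk) x^n + sum_k p(n,k) R_(k-1) x^(n-k),
  so the hypotheses say eta(x^n) - d_n x^n = sum_j alpha_j p_j. As deg p_j = j, the p_j form a
  basis of the polynomials of degree at most n - 1 in which eta is diagonal. Writing
  q = sum_j beta_j p_j, the defect eta(x^n + q) - d_n (x^n + q) has the coordinates
  alpha_j - (d_n - d_j) beta_j, and it vanishes iff all of them do.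
\<close>

lemma higher_pderiv_eq_0:
  assumes "degree y < k" shows "(pderiv ^^ k) y = 0"
  using assms by (simp add: poly_eq_iff coeff_higher_pderiv coeff_eq_0)

lemma diff_op_conv_sum:
  assumes "degree y \<le> N"
  shows "diff_op M y = (\<Sum>k\<le>N. M k * (pderiv ^^ k) y)"
  unfolding diff_op_def
  by (rule sum.mono_neutral_left) (use assms in \<open>auto simp: higher_pderiv_eq_0\<close>)

lemma diff_op_add: "diff_op M (a + b) = diff_op M a + diff_op M b"
proof -
  define N where "N = max (degree a) (degree b)"
  have "degree (a + b) \<le> N" "degree a \<le> N" "degree b \<le> N"
    by (simp_all add: N_def degree_add_le)
  then show ?thesis
    by (simp add: diff_op_conv_sum higher_pderiv_add distrib_left sum.distrib)
qed

lemma smult_sum_right: "smult c (\<Sum>i\<in>A. f i) = (\<Sum>i\<in>A. smult c (f i))"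
  by (induction A rule: infinite_finite_induct) (simp_all add: smult_add_right)

lemma diff_op_smult: "diff_op M (smult c a) = smult c (diff_op M a)"
  using diff_op_conv_sum[of "smult c a" "degree a" M]
  by (simp add: diff_op_def higher_pderiv_smult smult_sum_right)

lemma diff_op_0 [simp]: "diff_op M 0 = 0"
  by (simp add: diff_op_def)

lemma diff_op_sum: "diff_op M (\<Sum>j\<in>A. f j) = (\<Sum>j\<in>A. diff_op M (f j))"
  by (induction A rule: infinite_finite_induct) (simp_all add: diff_op_add)

lemma fact_eq_pnr_mult: "k \<le> n \<Longrightarrow> fact n = pnr n k * fact (n - k)"
  unfolding pnr_def by (simp add: fact_dvd)

lemma pnr_0 [simp]: "pnr n 0 = 1"
  by (simp add: pnr_def)

lemma pnr_Suc:
  assumes "Suc k \<le> n" shows "pnr n (Suc k) = pnr n k * (n - k)"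
proof -
  have "n - k = Suc (n - Suc k)" using assms by simp
  then have "fact (n - k) = (n - k) * (fact (n - Suc k) :: nat)"
    by (simp only: fact_Suc of_nat_id)
  have "pnr n (Suc k) * fact (n - Suc k) = fact n"
    using fact_eq_pnr_mult[OF assms] by simp
  also have "\<dots> = pnr n k * fact (n - k)"
    using assms by (intro fact_eq_pnr_mult) simp
  also have "\<dots> = pnr n k * (n - k) * fact (n - Suc k)"
    by (simp add: \<open>fact (n - k) = (n - k) * fact (n - Suc k)\<close>)
  finally show ?thesis by simp
qed

lemma higher_pderiv_monom_pnr:
  fixes c :: "'a::{comm_semiring_1,semiring_no_zero_divisors}"
  shows "k \<le> n \<Longrightarrow> (pderiv ^^ k) (monom c n) = monom (of_nat (pnr n k) * c) (n - k)"
proof (induction k)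
  case 0
  then show ?case by simp
next
  case (Suc k)
  then have "(pderiv ^^ Suc k) (monom c n) = pderiv (monom (of_nat (pnr n k) * c) (n - k))"
    by simp
  also have "\<dots> = monom (of_nat (n - k) * (of_nat (pnr n k) * c)) (n - k - 1)"
    by (rule pderiv_monom)
  also have "\<dots> = monom (of_nat (pnr n (Suc k)) * c) (n - Suc k)"
    by (simp add: pnr_Suc[OF Suc.prems] mult_ac)
  finally show ?case .
qed

lemma triangular_basis_spans:
  fixes p :: "nat \<Rightarrow> 'a::field poly"
  assumes p0: "p 0 \<noteq> 0" and deg: "\<And>r. r \<le> m \<Longrightarrow> degree (p r) = r"
    and q: "degree q \<le> m"
  shows "\<exists>c. q = (\<Sum>j=0..m. smult (c j) (p j))"
  using deg q
proof (induction m arbitrary: q)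
  case 0
  then have "q = [:coeff q 0:]" "p 0 = [:coeff (p 0) 0:]"
    by (simp_all add: degree_0_id)
  moreover have "coeff (p 0) 0 \<noteq> 0"
    using p0 \<open>p 0 = [:coeff (p 0) 0:]\<close> by auto
  ultimately have "q = smult (coeff q 0 / coeff (p 0) 0) (p 0)"
    by (metis smult_pCons smult_0_right nonzero_divide_eq_eq)
  then show ?case by auto
next
  case (Suc m)
  have deg_last: "degree (p (Suc m)) = Suc m" using Suc.prems by simp
  then have lc: "lead_coeff (p (Suc m)) \<noteq> 0"
    by (metis degree_0 leading_coeff_0_iff nat.distinct(1))
  define a where "a = coeff q (Suc m) / lead_coeff (p (Suc m))"
  have "degree (q - smult a (p (Suc m))) \<le> m"
  proof (rule degree_le, intro allI impI)
    fix i assume "m < i"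
    then consider "i = Suc m" | "Suc m < i" by linarith
    then show "coeff (q - smult a (p (Suc m))) i = 0"
    proof cases
      case 1
      then show ?thesis using lc deg_last by (simp add: a_def)
    next
      case 2
      then show ?thesis using Suc.prems(2) deg_last by (simp add: coeff_eq_0)
    qed
  qed
  then obtain c where c: "q - smult a (p (Suc m)) = (\<Sum>j=0..m. smult (c j) (p j))"
    using Suc by auto
  have "q = (\<Sum>j=0..Suc m. smult ((c(Suc m := a)) j) (p j))"
    using c by (simp add: algebra_simps)
  then show ?case by blast
qed

lemma triangular_basis_independent:
  fixes p :: "nat \<Rightarrow> 'a::field poly"
  assumes p0: "p 0 \<noteq> 0" and deg: "\<And>r. r \<le> m \<Longrightarrow> degree (p r) = r"
    and zero: "(\<Sum>j=0..m. smult (c j) (p j)) = 0"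
  shows "\<forall>j\<le>m. c j = 0"
  using deg zero
proof (induction m)
  case 0
  then show ?case using p0 by simp
next
  case (Suc m)
  have deg_last: "degree (p (Suc m)) = Suc m" using Suc.prems by simp
  have "coeff (\<Sum>j=0..m. smult (c j) (p j)) (Suc m) = 0"
    unfolding coeff_sum by (rule sum.neutral) (use Suc.prems in \<open>auto intro!: coeff_eq_0\<close>)
  then have "c (Suc m) * lead_coeff (p (Suc m)) = 0"
    using arg_cong[OF Suc.prems(2), of "\<lambda>q. coeff q (Suc m)"] deg_last by simp
  moreover have "lead_coeff (p (Suc m)) \<noteq> 0"
    using deg_last by (metis degree_0 leading_coeff_0_iff nat.distinct(1))
  ultimately have last: "c (Suc m) = 0" by simp
  then have "\<forall>j\<le>m. c j = 0" using Suc by simp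
  with last show ?case using le_Suc_eq by auto
qed

lemma diff_op_monom:
  "diff_op M (monom 1 n) =
     (\<Sum>k\<le>n. monom (of_nat (pnr n k) * mkk M k) n)
   + (\<Sum>k\<le>n. smult (of_nat (pnr n k)) (Rk M k * monom 1 (n - k)))"
proof -
  have summand: "M k * (pderiv ^^ k) (monom 1 n) =
      monom (of_nat (pnr n k) * mkk M k) n + smult (of_nat (pnr n k)) (Rk M k * monom 1 (n - k))"
    if "k \<le> n" for k
  proof -
    have "(pderiv ^^ k) (monom 1 n) = monom (of_nat (pnr n k)) (n - k)"
      using that by (simp add: higher_pderiv_monom_pnr)
    moreover have "monom (mkk M k) k * monom (of_nat (pnr n k)) (n - k)
        = monom (of_nat (pnr n k) * mkk M k) n"
      using that by (simp add: mult_monom mult.commute)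
    moreover have "Rk M k * monom (of_nat (pnr n k)) (n - k)
        = smult (of_nat (pnr n k)) (Rk M k * monom 1 (n - k))"
      by (metis mult_smult_right smult_monom mult.right_neutral)
    moreover have "M k = monom (mkk M k) k + Rk M k"
      by (simp add: Rk_def mkk_def)
    ultimately show ?thesis
      by (metis distrib_right)
  qed
  have "diff_op M (monom 1 n) = (\<Sum>k\<le>n. M k * (pderiv ^^ k) (monom 1 n))"
    by (simp add: diff_op_def degree_monom_eq)
  also have "\<dots> = (\<Sum>k\<le>n. monom (of_nat (pnr n k) * mkk M k) n
      + smult (of_nat (pnr n k)) (Rk M k * monom 1 (n - k)))"
    by (rule sum.cong) (simp_all add: summand)
  finally show ?thesis
    by (simp only: sum.distrib)
qed

lemma diff_op_eigen_completion_iff: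
  fixes p :: "nat \<Rightarrow> complex poly"
  assumes p0: "p 0 \<noteq> 0" and deg: "\<And>r. r \<le> m \<Longrightarrow> degree (p r) = r"
    and eig: "\<And>r. r \<le> m \<Longrightarrow> diff_op M (p r) = smult (d r) (p r)"
    and defect: "diff_op M v - smult \<mu> v = (\<Sum>j=0..m. smult (\<alpha> j) (p j))"
  shows "(\<exists>q. degree q \<le> m \<and> diff_op M (v + q) = smult \<mu> (v + q))
     \<longleftrightarrow> (\<exists>\<beta>. \<forall>j\<in>{0..m}. (\<mu> - d j) * \<beta> j = \<alpha> j)"
proof -
  have defect_shift: "diff_op M (v + (\<Sum>j=0..m. smult (c j) (p j)))
      - smult \<mu> (v + (\<Sum>j=0..m. smult (c j) (p j)))
      = (\<Sum>j=0..m. smult (\<alpha> j - (\<mu> - d j) * c j) (p j))" for c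
  proof -
    define S where "S = (\<Sum>j=0..m. smult (c j) (p j))"
    have "diff_op M S = (\<Sum>j=0..m. smult (c j * d j) (p j))"
      unfolding S_def by (simp add: diff_op_sum diff_op_smult eig)
    moreover have "smult \<mu> S = (\<Sum>j=0..m. smult (\<mu> * c j) (p j))"
      unfolding S_def by (simp add: smult_sum_right)
    ultimately have "diff_op M (v + S) - smult \<mu> (v + S)
        = (\<Sum>j=0..m. smult (\<alpha> j) (p j) + smult (c j * d j) (p j) - smult (\<mu> * c j) (p j))"
      using defect by (simp add: diff_op_add smult_add_right sum.distrib sum_subtractf)
    also have "\<dots> = (\<Sum>j=0..m. smult (\<alpha> j - (\<mu> - d j) * c j) (p j))"
      by (rule sum.cong) (simp_all add: algebra_simps flip: smult_add_left smult_diff_left)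
    finally show ?thesis by (simp add: S_def)
  qed
  show ?thesis
  proof
    assume "\<exists>q. degree q \<le> m \<and> diff_op M (v + q) = smult \<mu> (v + q)"
    then obtain q where "degree q \<le> m" and q_eig: "diff_op M (v + q) = smult \<mu> (v + q)"
      by blast
    then obtain c where "q = (\<Sum>j=0..m. smult (c j) (p j))"
      using triangular_basis_spans[where m = m, OF p0 deg] by blast
    with q_eig have "(\<Sum>j=0..m. smult (\<alpha> j - (\<mu> - d j) * c j) (p j)) = 0"
      using defect_shift[of c] by simp
    from triangular_basis_independent[where m = m, OF p0 deg this]
    have "\<forall>j\<le>m. \<alpha> j - (\<mu> - d j) * c j = 0" .
    then show "\<exists>\<beta>. \<forall>j\<in>{0..m}. (\<mu> - d j) * \<beta> j = \<alpha> j"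
      by auto
  next
    assume "\<exists>\<beta>. \<forall>j\<in>{0..m}. (\<mu> - d j) * \<beta> j = \<alpha> j"
    then obtain \<beta> where \<beta>: "\<forall>j\<in>{0..m}. (\<mu> - d j) * \<beta> j = \<alpha> j" by blast
    have "degree (\<Sum>j=0..m. smult (\<beta> j) (p j)) \<le> m"
      by (rule degree_sum_le) (auto intro: order.trans[OF degree_smult_le] simp: deg)
    moreover have "(\<Sum>j=0..m. smult (\<alpha> j - (\<mu> - d j) * \<beta> j) (p j)) = 0"
      using \<beta> by (intro sum.neutral) auto
    ultimately show "\<exists>q. degree q \<le> m \<and> diff_op M (v + q) = smult \<mu> (v + q)"
      using defect_shift[of \<beta>] by auto
  qed
qed

theorem proposition1:
  fixes M :: "nat \<Rightarrow> complex poly" and d :: "nat \<Rightarrow> complex" and n :: nat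
    and p :: "nat \<Rightarrow> complex poly" and \<alpha> :: "nat \<Rightarrow> complex"
  assumes degM: "\<And>k. degree (M k) \<le> k"
    and n_pos: "n \<ge> 1"
    and dn: "d n - d 0 = (\<Sum>k=1..n. of_nat (pnr n k) * mkk M k)"
    and p0: "p 0 = 1"
    and deg_p: "\<And>r. r \<le> n - 1 \<Longrightarrow> degree (p r) = r"
    and eig_p: "\<And>r. r \<le> n - 1 \<Longrightarrow> diff_op M (p r) = smult (d r) (p r)"
    and alpha: "(\<Sum>k=1..n. smult (of_nat (pnr n k)) (Rk M k * monom 1 (n - k)))
                  = (\<Sum>j=0..n-1. smult (\<alpha> j) (p j))"
  shows "(\<exists>pn q. pn = monom 1 n + q \<and> degree q \<le> n - 1 \<and> diff_op M pn = smult (d n) pn)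
     \<longleftrightarrow> (\<exists>\<beta> :: nat \<Rightarrow> complex. \<forall>j\<in>{0..n-1}. (d n - d j) * \<beta> j = \<alpha> j)"
proof -
  have "M 0 = [:d 0:]"
    using eig_p[of 0] by (simp add: p0 diff_op_def)
  then have "mkk M 0 = d 0" "Rk M 0 = 0"
    by (simp_all add: mkk_def Rk_def monom_0)
  then have "diff_op M (monom 1 n)
      = monom (d 0 + (\<Sum>k=1..n. of_nat (pnr n k) * mkk M k)) n
      + (\<Sum>k=1..n. smult (of_nat (pnr n k)) (Rk M k * monom 1 (n - k)))"
    by (simp add: diff_op_monom atMost_atLeast0 sum.atLeast_Suc_atMost monom_sum flip: add_monom)
  also have "d 0 + (\<Sum>k=1..n. of_nat (pnr n k) * mkk M k) = d n"
    using dn by (simp add: algebra_simps)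
  finally have "diff_op M (monom 1 n) - smult (d n) (monom 1 n) = (\<Sum>j=0..n-1. smult (\<alpha> j) (p j))"
    unfolding alpha by (simp add: smult_monom)
  from diff_op_eigen_completion_iff[where m = "n - 1", OF _ deg_p eig_p this]
  show ?thesis
    by (simp add: p0)
qed

end
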